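(* Consider the weighted set cover instance with universe $\mathcal U=\{1,\dots,N\}$, sets $\mathcal P=\{\mathcal S_1,\dots,\mathcal S_r\}$ and weight function $w$, and let $(\bar A,\bar B=\mathbb I_{r+1},\bar C=\mathbb I_r)$ and $P$ be the structured system and feedback cost matrix constructed from it as in the context. If $\bar K$ is a (feasible) solution to Problem 1 for this instance, then $\mathcal S(\bar K)$ covers $\mathcal U$.
   Context: Structured system $(\bar A,\bar B,\bar C)$: $\{0,\star\}$-matrices; numerical realization = real matrices vanishing where the structured ones are $0$. Feedback cost matrix $P\in(\mathbb R\cup\{\infty\})^{m\times p}$, $P_{ij}$ = cost of feeding output $j$ to input $i$, $\infty$ = infeasible. Feedback pattern $\bar K\in\{0,\star\}^{m\times p}$, $\bar K_{ij}=\star$ only if $P_{ij}<\infty$. No structurally fixed modes: some numerical realization has $\bigcap_K\sigma(A+BKC)=\emptyset$ over all real $K$ vanishing where $\bar K$ vanishes. Problem 1: minimize $P(\bar K)=\sum_{\bar K_{ij}=\star}P_{ij}$ over patterns with no structurally fixed modes; such patterns are its solutions. Weighted set cover: $\bigcup_i\mathcal S_i=\mathcal U$, a cover is a subcollection whose union is $\mathcal U$. Construction: states $x_1,\dots,x_{N+r+1}$, inputs $u_1,\dots,u_{r+1}$, outputs $y_1,\dots,y_r$; $\bar A_{ij}=\star$ iff $i=j$, or $i\in\{1,..,N\}$ and $j=N+r+1$, or $i\in\{N+1,..,N+r\}$ and $j\in\mathcal S_{i-N}$ ($\bar A_{ij}=\star$ meaning $x_j$ influences $x_i$); $\bar B_{ij}=\star$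 iff $i=N+j$ ($j=1,..,r+1$); $\bar C_{ij}=\star$ iff $j=N+i$ ($i=1,..,r$); $P_{r+1,j}=w(\mathcal S_j)$ and $P_{jj}=0$ for $j=1,\dots,r$, all other entries $\infty$. $\mathcal S(\bar K)=\{\mathcal S_j:\bar K_{r+1,j}=\star\}$. *)

theory Defs
  imports "Jordan_Normal_Form.Char_Poly" "HOL-Library.Extended_Real"
begin

text \<open>Structured matrices as {0,star}-patterns, 1-based indices: Pat i j = True means star.
  A real matrix (0-based entries) realizes a pattern if it vanishes where the pattern is 0.\<close>
type_synonym pattern = "nat \<Rightarrow> nat \<Rightarrow> bool"

definition realizes :: "pattern \<Rightarrow> real mat \<Rightarrow> bool" where
  "realizes Pat M \<longleftrightarrow>
     (\<forall>i<dim_row M. \<forall>j<dim_col M. \<not> Pat (Suc i) (Suc j) \<longrightarrow> M $$ (i, j) = 0)"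

definition spec :: "real mat \<Rightarrow> complex set" where
  "spec M = {z. eigenvalue (map_mat complex_of_real M) z}"

definition no_SFM :: "nat \<Rightarrow> nat \<Rightarrow> nat \<Rightarrow> pattern \<Rightarrow> pattern \<Rightarrow> pattern \<Rightarrow> pattern \<Rightarrow> bool" where
  "no_SFM n m p Abar Bbar Cbar Kbar \<longleftrightarrow>
     (\<exists>A B C. A \<in> carrier_mat n n \<and> B \<in> carrier_mat n m \<and> C \<in> carrier_mat p n \<and>
        realizes Abar A \<and> realizes Bbar B \<and> realizes Cbar C \<and>
        (\<Inter>K \<in> {K. K \<in> carrier_mat m p \<and> realizes Kbar K}. spec (A + B * K * C)) = {})"

definition feasible_pattern :: "nat \<Rightarrow> nat \<Rightarrow> (nat \<Rightarrow> nat \<Rightarrow> ereal) \<Rightarrow> pattern \<Rightarrow> bool" where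
  "feasible_pattern m p P Kbar \<longleftrightarrow>
     (\<forall>i\<in>{1..m}. \<forall>j\<in>{1..p}. Kbar i j \<longrightarrow> P i j < \<infinity>)"

definition pattern_cost :: "nat \<Rightarrow> nat \<Rightarrow> (nat \<Rightarrow> nat \<Rightarrow> ereal) \<Rightarrow> pattern \<Rightarrow> ereal" where
  "pattern_cost m p P Kbar = (\<Sum>(i, j) \<in> {(i, j). i \<in> {1..m} \<and> j \<in> {1..p} \<and> Kbar i j}. P i j)"

definition problem1_solution ::
  "nat \<Rightarrow> nat \<Rightarrow> nat \<Rightarrow> pattern \<Rightarrow> pattern \<Rightarrow> pattern \<Rightarrow> (nat \<Rightarrow> nat \<Rightarrow> ereal) \<Rightarrow> pattern \<Rightarrow> bool" where
  "problem1_solution n m p Abar Bbar Cbar P Kbar \<longleftrightarrow>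
     feasible_pattern m p P Kbar \<and> no_SFM n m p Abar Bbar Cbar Kbar \<and>
     (\<forall>K'. feasible_pattern m p P K' \<and> no_SFM n m p Abar Bbar Cbar K' \<longrightarrow>
        pattern_cost m p P Kbar \<le> pattern_cost m p P K')"

definition cover_A :: "nat \<Rightarrow> nat \<Rightarrow> (nat \<Rightarrow> nat set) \<Rightarrow> pattern" where
  "cover_A N r S i j \<longleftrightarrow> i = j \<or> (i \<in> {1..N} \<and> j = N + r + 1) \<or>
      (i \<in> {N+1..N+r} \<and> j \<in> S (i - N))"

definition cover_B :: "nat \<Rightarrow> nat \<Rightarrow> pattern" where
  "cover_B N r i j \<longleftrightarrow> j \<in> {1..r+1} \<and> i = N + j"

definition cover_C :: "nat \<Rightarrow> nat \<Rightarrow> pattern" where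
  "cover_C N r i j \<longleftrightarrow> i \<in> {1..r} \<and> j = N + i"

definition cover_P :: "nat \<Rightarrow> (nat \<Rightarrow> nat set) \<Rightarrow> (nat set \<Rightarrow> real) \<Rightarrow> nat \<Rightarrow> nat \<Rightarrow> ereal" where
  "cover_P r S w i j =
     (if i = r + 1 \<and> j \<in> {1..r} then ereal (w (S j))
      else if i = j \<and> j \<in> {1..r} then 0 else \<infinity>)"

end

theory Submission
  imports Defs
begin

text \<open>Suppose some \<open>u \<in> {1..N}\<close> lies in none of the chosen sets and let \<open>M = A + B K C\<close>.
  Feedback only adds self-loops at the set states \<open>x\<^bsub>N+j\<^esub>\<close> and edges from the states of
  chosen sets into \<open>x\<^bsub>N+r+1\<^esub>\<close>. Hence column \<open>u\<close> of \<open>M\<close> is supported on \<open>u\<close> and the set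
  states \<open>x\<^bsub>N+j\<^esub>\<close> with \<open>u \<in> S\<^sub>j\<close>, while the columns of these set states are supported on
  the diagonal. The coordinate subspace spanned by these states is therefore \<open>M\<close>-invariant and
  \<open>M\<close> is triangular on it, so the diagonal entry \<open>A\<^bsub>uu\<^esub>\<close>, which no feedback changes, is an
  eigenvalue of \<open>M\<close> for every \<open>K\<close>: a structurally fixed mode.\<close>

definition pattern_mult :: "nat \<Rightarrow> pattern \<Rightarrow> pattern \<Rightarrow> pattern" where
  "pattern_mult k P Q i j \<longleftrightarrow> (\<exists>l\<in>{1..k}. P i l \<and> Q l j)"

lemma realizes_mono: "realizes P M \<Longrightarrow> (\<And>i j. P i j \<Longrightarrow> Q i j) \<Longrightarrow> realizes Q M"
  unfolding realizes_def by blast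

lemma realizes_add:
  assumes "A \<in> carrier_mat n m" "B \<in> carrier_mat n m" "realizes P A" "realizes Q B"
  shows "realizes (\<lambda>i j. P i j \<or> Q i j) (A + B)"
  using assms unfolding realizes_def by auto

lemma index_mult_mat_nonzero_imp:
  fixes A B :: "'a::semiring_0 mat"
  assumes A: "A \<in> carrier_mat n k" and B: "B \<in> carrier_mat k m"
    and ij: "i < n" "j < m" and nz: "(A * B) $$ (i, j) \<noteq> 0"
  obtains l where "l < k" "A $$ (i, l) \<noteq> 0" "B $$ (l, j) \<noteq> 0"
proof -
  have "(\<Sum>l\<in>{0..<k}. A $$ (i, l) * B $$ (l, j)) \<noteq> 0"
    using nz A B ij by (simp add: scalar_prod_def)
  then obtain l where "l \<in> {0..<k}" "A $$ (i, l) * B $$ (l, j) \<noteq> 0"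
    by (rule sum.not_neutral_contains_not_neutral)
  then show ?thesis using that by (auto dest: mult_not_zero)
qed

lemma realizes_mult:
  assumes A: "A \<in> carrier_mat n k" and B: "B \<in> carrier_mat k m"
    and "realizes P A" "realizes Q B"
  shows "realizes (pattern_mult k P Q) (A * B)"
  unfolding realizes_def
proof (intro allI impI)
  fix i j
  assume "i < dim_row (A * B)" "j < dim_col (A * B)"
    and no_pattern: "\<not> pattern_mult k P Q (Suc i) (Suc j)"
  then have ij: "i < n" "j < m" using A B by auto
  show "(A * B) $$ (i, j) = 0"
  proof (rule ccontr)
    assume "(A * B) $$ (i, j) \<noteq> 0"
    then obtain l where "l < k" "A $$ (i, l) \<noteq> 0" "B $$ (l, j) \<noteq> 0"
      using index_mult_mat_nonzero_imp[OF A B ij] by blast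
    then have "P (Suc i) (Suc l)" "Q (Suc l) (Suc j)"
      using assms ij unfolding realizes_def by fastforce+
    with \<open>l < k\<close> no_pattern show False unfolding pattern_mult_def by force
  qed
qed

definition cover_feedback :: "nat \<Rightarrow> nat \<Rightarrow> pattern \<Rightarrow> pattern" where
  "cover_feedback N r Kbar i j \<longleftrightarrow>
     (\<exists>l\<in>{1..r}. j = N + l \<and> (i = j \<or> (i = N + r + 1 \<and> Kbar (r + 1) l)))"

lemma cover_feedback_pattern:
  assumes "feasible_pattern (r + 1) r (cover_P r S w) Kbar"
    and "pattern_mult r (pattern_mult (r + 1) (cover_B N r) Kbar) (cover_C N r) i j"
  shows "cover_feedback N r Kbar i j"
  using assms
  unfolding feasible_pattern_def pattern_mult_def cover_B_def cover_C_def cover_P_def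
    cover_feedback_def
  by (fastforce split: if_splits)

lemma realizes_cover_feedback:
  assumes "feasible_pattern (r + 1) r (cover_P r S w) Kbar"
    and B: "B \<in> carrier_mat (N + r + 1) (r + 1)" and K: "K \<in> carrier_mat (r + 1) r"
    and C: "C \<in> carrier_mat r (N + r + 1)"
    and "realizes (cover_B N r) B" "realizes Kbar K" "realizes (cover_C N r) C"
  shows "realizes (cover_feedback N r Kbar) (B * K * C)"
proof -
  have "realizes (pattern_mult (r + 1) (cover_B N r) Kbar) (B * K)"
    using assms by (intro realizes_mult) auto
  then have
    "realizes (pattern_mult r (pattern_mult (r + 1) (cover_B N r) Kbar) (cover_C N r)) (B * K * C)"
    using assms by (intro realizes_mult[of _ _ r]) auto
  then show ?thesis using cover_feedback_pattern[OF assms(1)] by (rule realizes_mono)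
qed

lemma eigenvalue_diagonal_entry_of_diagonal_column:
  fixes M :: "'a::comm_ring_1 mat"
  assumes M: "M \<in> carrier_mat n n" and b: "b < n"
    and col_b: "\<And>a. a < n \<Longrightarrow> a \<noteq> b \<Longrightarrow> M $$ (a, b) = 0"
  shows "eigenvalue M (M $$ (b, b))"
proof -
  have "M *\<^sub>v unit_vec n b = M $$ (b, b) \<cdot>\<^sub>v unit_vec n b"
  proof (rule eq_vecI)
    fix a assume "a < dim_vec (M $$ (b, b) \<cdot>\<^sub>v unit_vec n b)"
    then have a: "a < n" by simp
    have "row M a \<bullet> unit_vec n b = M $$ (a, b)" using M a b by simp
    then show "(M *\<^sub>v unit_vec n b) $ a = (M $$ (b, b) \<cdot>\<^sub>v unit_vec n b) $ a"
      using M a b col_b[OF a] by auto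
  qed (use M in simp)
  then show ?thesis
    unfolding eigenvalue_def eigenvector_def using M b by (intro exI[of _ "unit_vec n b"]) auto
qed

lemma eigenvalue_diagonal_entry_of_column_supports:
  fixes M :: "'a::field mat"
  assumes M: "M \<in> carrier_mat n n" and x: "x < n" and W: "W \<subseteq> {..<n}" "x \<notin> W"
    and col_x: "\<And>a. a < n \<Longrightarrow> a \<noteq> x \<Longrightarrow> a \<notin> W \<Longrightarrow> M $$ (a, x) = 0"
    and col_W: "\<And>a b. b \<in> W \<Longrightarrow> a < n \<Longrightarrow> a \<noteq> b \<Longrightarrow> M $$ (a, b) = 0"
  shows "eigenvalue M (M $$ (x, x))"
proof (cases "\<exists>b\<in>W. M $$ (b, b) = M $$ (x, x)")
  case True
  then obtain b where "b \<in> W" "M $$ (b, b) = M $$ (x, x)" by blast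
  then show ?thesis
    using eigenvalue_diagonal_entry_of_diagonal_column[OF M, of b] col_W W by auto
next
  case False
  define c where "c = M $$ (x, x)"
  \<comment> \<open>Row \<open>a \<in> W\<close> of \<open>(M - c I) v = 0\<close> reads \<open>M\<^bsub>ax\<^esub> + (M\<^bsub>aa\<^esub> - c) v\<^bsub>a\<^esub> = 0\<close>.\<close>
  define v where "v = vec n (\<lambda>a. if a = x then 1
    else if a \<in> W then M $$ (a, x) / (c - M $$ (a, a)) else 0)"
  have "M *\<^sub>v v = c \<cdot>\<^sub>v v"
  proof (rule eq_vecI)
    fix a assume "a < dim_vec (c \<cdot>\<^sub>v v)"
    then have a: "a < n" by (simp add: v_def)
    have off_support: "M $$ (a, b) * v $ b = 0" if "b < n" "b \<noteq> x" "b \<noteq> a \<or> a \<notin> W" for b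
      using col_W[of b a] that a by (auto simp: v_def)
    have "(M *\<^sub>v v) $ a = (\<Sum>b\<in>{..<n}. M $$ (a, b) * v $ b)"
      using M a by (simp add: scalar_prod_def v_def lessThan_atLeast0)
    also have "\<dots> = (\<Sum>b\<in>{x} \<union> ({a} \<inter> W). M $$ (a, b) * v $ b)"
      by (rule sum.mono_neutral_right) (use off_support x a in auto)
    also have "\<dots> = c * v $ a"
      using col_x[OF a] False x a W
      by (cases "a = x"; cases "a \<in> W") (auto simp: v_def c_def field_simps)
    finally show "(M *\<^sub>v v) $ a = (c \<cdot>\<^sub>v v) $ a" using a by (simp add: v_def)
  qed (use M in \<open>simp add: v_def\<close>)
  moreover have "v \<noteq> 0\<^sub>v n"
  proof
    assume "v = 0\<^sub>v n"
    then have "v $ x = 0" using x by simp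
    then show False using x by (simp add: v_def)
  qed
  ultimately show ?thesis
    unfolding eigenvalue_def eigenvector_def c_def using M by (intro exI[of _ v]) (auto simp: v_def)
qed

lemma cover_uncovered_element_is_fixed_mode:
  assumes S: "\<forall>j\<in>{1..r}. S j \<subseteq> {1..N}"
    and feasible: "feasible_pattern (r + 1) r (cover_P r S w) Kbar"
    and u: "u \<in> {1..N}" and uncovered: "\<forall>j\<in>{1..r}. Kbar (r + 1) j \<longrightarrow> u \<notin> S j"
    and A: "A \<in> carrier_mat (N + r + 1) (N + r + 1)" and B: "B \<in> carrier_mat (N + r + 1) (r + 1)"
    and C: "C \<in> carrier_mat r (N + r + 1)" and K: "K \<in> carrier_mat (r + 1) r"
    and rA: "realizes (cover_A N r S) A" and rB: "realizes (cover_B N r) B"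
    and rC: "realizes (cover_C N r) C" and rK: "realizes Kbar K"
  shows "complex_of_real (A $$ (u - 1, u - 1)) \<in> spec (A + B * K * C)"
proof -
  define n where "n = N + r + 1"
  define M where "M = A + B * K * C"
  define x where "x = u - 1"
  define W where "W = {b. N \<le> b \<and> b < N + r \<and> u \<in> S (Suc b - N)}"
  have M: "M \<in> carrier_mat n n" using A B C K by (simp add: M_def n_def)
  have x: "x < N" "Suc x = u" using u by (auto simp: x_def)
  have feedback: "realizes (cover_feedback N r Kbar) (B * K * C)"
    using realizes_cover_feedback[OF feasible B K C rB rK rC] .
  have closed_loop: "realizes (\<lambda>i j. cover_A N r S i j \<or> cover_feedback N r Kbar i j) M"
    unfolding M_def by (rule realizes_add[OF A _ rA feedback]) (use B K C in auto)
  have col_x: "M $$ (a, x) = 0" if "a < n" "a \<noteq> x" "a \<notin> W" for a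
    using closed_loop that x M unfolding realizes_def cover_A_def cover_feedback_def W_def n_def
    by auto
  have col_W: "M $$ (a, b) = 0" if "b \<in> W" "a < n" "a \<noteq> b" for a b
  proof -
    have "\<not> cover_A N r S (Suc a) (Suc b)"
      using S that unfolding cover_A_def W_def by force
    moreover have "\<not> cover_feedback N r Kbar (Suc a) (Suc b)"
      using uncovered that unfolding cover_feedback_def W_def by force
    ultimately show ?thesis
      using closed_loop that M unfolding realizes_def W_def n_def by auto
  qed
  have "M $$ (x, x) = A $$ (x, x) + (B * K * C) $$ (x, x)"
    unfolding M_def using x A B C K by (intro index_add_mat(1)) auto
  also have "(B * K * C) $$ (x, x) = 0"
    using feedback x B C unfolding realizes_def cover_feedback_def by auto
  finally have diagonal: "M $$ (x, x) = A $$ (x, x)" by simp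
  have "eigenvalue M (M $$ (x, x))"
  proof (rule eigenvalue_diagonal_entry_of_column_supports[OF M _ _ _ col_x col_W])
    show "x < n" "W \<subseteq> {..<n}" "x \<notin> W" using x by (auto simp: W_def n_def)
  qed
  then have "eigenvalue (map_mat complex_of_real M) (complex_of_real (A $$ (x, x)))"
    unfolding diagonal by (rule of_real_hom.eigenvalue_hom[OF M])
  then show ?thesis by (simp add: spec_def M_def x_def)
qed

theorem lemma1:
  fixes N r :: nat and S :: "nat \<Rightarrow> nat set" and w :: "nat set \<Rightarrow> real" and Kbar :: pattern
  assumes "\<forall>j\<in>{1..r}. S j \<subseteq> {1..N}"
    and "(\<Union>j\<in>{1..r}. S j) = {1..N}"
    and "problem1_solution (N + r + 1) (r + 1) r (cover_A N r S) (cover_B N r) (cover_C N r)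
           (cover_P r S w) Kbar"
  shows "(\<Union>j\<in>{j\<in>{1..r}. Kbar (r + 1) j}. S j) = {1..N}"
proof (rule ccontr)
  assume "\<not> ?thesis"
  moreover have "(\<Union>j\<in>{j\<in>{1..r}. Kbar (r + 1) j}. S j) \<subseteq> {1..N}" using assms(1) by auto
  ultimately obtain u where u: "u \<in> {1..N}"
    and uncovered: "\<forall>j\<in>{1..r}. Kbar (r + 1) j \<longrightarrow> u \<notin> S j" by blast
  from assms(3) have feasible: "feasible_pattern (r + 1) r (cover_P r S w) Kbar"
    unfolding problem1_solution_def by blast
  from assms(3) obtain A B C where
    A: "A \<in> carrier_mat (N + r + 1) (N + r + 1)" and B: "B \<in> carrier_mat (N + r + 1) (r + 1)"
    and C: "C \<in> carrier_mat r (N + r + 1)" and rA: "realizes (cover_A N r S) A"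
    and rB: "realizes (cover_B N r) B" and rC: "realizes (cover_C N r) C"
    and no_fixed_mode:
      "(\<Inter>K \<in> {K. K \<in> carrier_mat (r + 1) r \<and> realizes Kbar K}. spec (A + B * K * C)) = {}"
    unfolding problem1_solution_def no_SFM_def by blast
  have "complex_of_real (A $$ (u - 1, u - 1)) \<in> spec (A + B * K * C)"
    if "K \<in> carrier_mat (r + 1) r" "realizes Kbar K" for K
    using cover_uncovered_element_is_fixed_mode
      [OF assms(1) feasible u uncovered A B C that(1) rA rB rC that(2)] .
  with no_fixed_mode show False by blast
qed

end
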